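(* Let $p$ be a prime and $n\ge 2$, and let $T^+(n,\mathbf{Q}_p)$ be the group (under matrix multiplication) of upper-triangular $n\times n$ matrices over $\mathbf{Q}_p$ with all diagonal entries equal to $1$. For $A=\{a_{j,k}\}$ put $N(A)=\max_{1\le j<k\le n}|a_{j,k}|_p^{1/(k-j)}$. Then $N(A^{-1})=N(A)$ for every $A\in T^+(n,\mathbf{Q}_p)$, and $N((A')^{-1}A)$ defines a left-invariant ultrametric and $N(A(A')^{-1})$ a right-invariant ultrametric on $T^+(n,\mathbf{Q}_p)$, each determining the topology induced from the usual topology on $M_n(\mathbf{Q}_p)$.
   Context: $|\cdot|_p$ denotes the $p$-adic absolute value; $M_n(\mathbf{Q}_p)$ carries the product topology of $\mathbf{Q}_p^{n^2}$. *)

theory Defs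
  imports Complex_Main "HOL-Computational_Algebra.Computational_Algebra"
begin

definition padic_abs_rat :: "nat \<Rightarrow> rat \<Rightarrow> real" where
  "padic_abs_rat p q =
     (if q = 0 then 0 else
        (case quotient_of q of (a, b) \<Rightarrow>
          real p powr (- (real (multiplicity (int p) a) - real (multiplicity (int p) b)))))"

text \<open>A field with an absolute value which is (isomorphic to) the field Q_p of p-adic numbers:
  a complete non-archimedean valued field of characteristic 0 whose absolute value restricts to
  the p-adic absolute value on Q, and in which Q is dense (i.e. the completion of Q w.r.t. |.|_p).\<close>
definition is_padic_field :: "nat \<Rightarrow> ('a::field_char_0 \<Rightarrow> real) \<Rightarrow> bool" where
  "is_padic_field p absv \<longleftrightarrow>
     (\<forall>x. absv x \<ge> 0) \<and> (\<forall>x. absv x = 0 \<longleftrightarrow> x = 0) \<and>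
     (\<forall>x y. absv (x * y) = absv x * absv y) \<and>
     (\<forall>x y. absv (x + y) \<le> max (absv x) (absv y)) \<and>
     (\<forall>q. absv (of_rat q) = padic_abs_rat p q) \<and>
     (\<forall>x. \<forall>e>0. \<exists>q. absv (x - of_rat q) < e) \<and>
     (\<forall>X :: nat \<Rightarrow> 'a. (\<forall>e>0. \<exists>M. \<forall>m\<ge>M. \<forall>k\<ge>M. absv (X m - X k) < e) \<longrightarrow>
          (\<exists>L. \<forall>e>0. \<exists>M. \<forall>m\<ge>M. absv (X m - L) < e))"

text \<open>n x n matrices are represented as functions nat => nat => 'a indexed by 1..n,
  with all entries outside {1..n} x {1..n} equal to 0.\<close>
definition mmul :: "nat \<Rightarrow> (nat \<Rightarrow> nat \<Rightarrow> 'a::field) \<Rightarrow> (nat \<Rightarrow> nat \<Rightarrow> 'a) \<Rightarrow> nat \<Rightarrow> nat \<Rightarrow> 'a" where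
  "mmul n A B = (\<lambda>j k. if j \<in> {1..n} \<and> k \<in> {1..n} then (\<Sum>i=1..n. A j i * B i k) else 0)"

definition idm :: "nat \<Rightarrow> nat \<Rightarrow> nat \<Rightarrow> 'a::field" where
  "idm n = (\<lambda>j k. if j \<in> {1..n} \<and> j = k then 1 else 0)"

definition Tplus :: "nat \<Rightarrow> (nat \<Rightarrow> nat \<Rightarrow> 'a::field) set" where
  "Tplus n = {A. (\<forall>j k. (j \<notin> {1..n} \<or> k \<notin> {1..n}) \<longrightarrow> A j k = 0) \<and>
                 (\<forall>j\<in>{1..n}. A j j = 1) \<and>
                 (\<forall>j k. 1 \<le> k \<and> k < j \<and> j \<le> n \<longrightarrow> A j k = 0)}"

definition minv :: "nat \<Rightarrow> (nat \<Rightarrow> nat \<Rightarrow> 'a::field) \<Rightarrow> nat \<Rightarrow> nat \<Rightarrow> 'a" where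
  "minv n A = (THE B. B \<in> Tplus n \<and> mmul n A B = idm n \<and> mmul n B A = idm n)"

definition Nnorm :: "nat \<Rightarrow> ('a \<Rightarrow> real) \<Rightarrow> (nat \<Rightarrow> nat \<Rightarrow> 'a) \<Rightarrow> real" where
  "Nnorm n absv A = Max {absv (A j k) powr (1 / real (k - j)) | j k. 1 \<le> j \<and> j < k \<and> k \<le> n}"

definition is_ultrametric_on :: "'b set \<Rightarrow> ('b \<Rightarrow> 'b \<Rightarrow> real) \<Rightarrow> bool" where
  "is_ultrametric_on S d \<longleftrightarrow>
     (\<forall>x\<in>S. \<forall>y\<in>S. d x y \<ge> 0 \<and> (d x y = 0 \<longleftrightarrow> x = y) \<and> d x y = d y x) \<and>
     (\<forall>x\<in>S. \<forall>y\<in>S. \<forall>z\<in>S. d x z \<le> max (d x y) (d y z))"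

definition metric_open_in :: "'b set \<Rightarrow> ('b \<Rightarrow> 'b \<Rightarrow> real) \<Rightarrow> 'b set \<Rightarrow> bool" where
  "metric_open_in S d U \<longleftrightarrow> U \<subseteq> S \<and> (\<forall>x\<in>U. \<exists>e>0. \<forall>y\<in>S. d x y < e \<longrightarrow> y \<in> U)"

text \<open>Open subsets of S \<subseteq> M_n(K) for the subspace topology induced from the product topology
  on M_n(K) = K^(n^2), K carrying the topology of its absolute value (basic open boxes).\<close>
definition matrix_open_in :: "nat \<Rightarrow> ('a::field \<Rightarrow> real) \<Rightarrow> (nat \<Rightarrow> nat \<Rightarrow> 'a) set \<Rightarrow>
    (nat \<Rightarrow> nat \<Rightarrow> 'a) set \<Rightarrow> bool" where
  "matrix_open_in n absv S U \<longleftrightarrow> U \<subseteq> S \<and>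
     (\<forall>A\<in>U. \<exists>e>0. \<forall>B\<in>S. (\<forall>j\<in>{1..n}. \<forall>k\<in>{1..n}. absv (B j k - A j k) < e) \<longrightarrow> B \<in> U)"

end

theory Submission
  imports Defs
begin

text \<open>For \<open>M \<ge> 0\<close> we have \<open>N(A) \<le> M\<close> iff \<open>|a\<^sub>j\<^sub>k| \<le> M\<^sup>k\<^sup>-\<^sup>j\<close> for all \<open>j < k\<close>. This graded bound is
  stable under products, since the \<open>(j,k)\<close> entry of \<open>AB\<close> is a sum of terms \<open>a\<^sub>j\<^sub>i b\<^sub>i\<^sub>k\<close> with
  \<open>(i - j) + (k - i) = k - j\<close> and the absolute value is ultrametric, and under inverses, whose
  entries are computed by back substitution (induction on \<open>k - j\<close>). Hence \<open>N(AB) \<le> max N(A) N(B)\<close>,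
  \<open>N(A\<inverse>) = N(A)\<close> and \<open>N(A) = 0\<close> only for \<open>A = I\<close>, which is all the group-invariant ultrametrics
  need. For the topology, when \<open>M \<le> 1\<close> the bounds \<open>M\<^sup>k\<^sup>-\<^sup>j\<close> lie between \<open>M\<^sup>n\<close> and \<open>M\<close>, so \<open>N(D)\<close> is
  small iff \<open>D\<close> is entrywise close to \<open>I\<close>; and multiplication by a fixed matrix is entrywise
  Lipschitz. Only the ultrametric inequality of \<open>|\<cdot>|\<^sub>p\<close> is used.\<close>

section \<open>The group \<open>T\<^sup>+(n)\<close>\<close>

lemma mmul_assoc: "mmul n (mmul n A B) C = mmul n A (mmul n B C)"
proof (intro ext)
  fix j k
  show "mmul n (mmul n A B) C j k = mmul n A (mmul n B C) j k"
  proof (cases "j \<in> {1..n} \<and> k \<in> {1..n}")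
    case True
    have "(\<Sum>i=1..n. (\<Sum>l=1..n. A j l * B l i) * C i k) = (\<Sum>i=1..n. \<Sum>l=1..n. A j l * B l i * C i k)"
      by (simp add: sum_distrib_right)
    also have "\<dots> = (\<Sum>l=1..n. \<Sum>i=1..n. A j l * B l i * C i k)"
      by (rule sum.swap)
    also have "\<dots> = (\<Sum>l=1..n. A j l * (\<Sum>i=1..n. B l i * C i k))"
      by (simp add: sum_distrib_left mult.assoc)
    finally show ?thesis
      using True by (simp add: mmul_def)
  qed (auto simp: mmul_def)
qed

lemma mmul_idm_left:
  assumes "\<And>j k. j \<notin> {1..n} \<or> k \<notin> {1..n} \<Longrightarrow> A j k = 0"
  shows "mmul n (idm n) A = A"
proof (intro ext)
  fix j k
  show "mmul n (idm n) A j k = A j k"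
  proof (cases "j \<in> {1..n} \<and> k \<in> {1..n}")
    case True
    have "(\<Sum>i=1..n. idm n j i * A i k) = (\<Sum>i\<in>{j}. idm n j i * A i k)"
      using True by (intro sum.mono_neutral_right) (auto simp: idm_def)
    then show ?thesis
      using True by (simp add: mmul_def idm_def)
  qed (use assms in \<open>auto simp: mmul_def\<close>)
qed

lemma mmul_idm_right:
  assumes "\<And>j k. j \<notin> {1..n} \<or> k \<notin> {1..n} \<Longrightarrow> A j k = 0"
  shows "mmul n A (idm n) = A"
proof (intro ext)
  fix j k
  show "mmul n A (idm n) j k = A j k"
  proof (cases "j \<in> {1..n} \<and> k \<in> {1..n}")
    case True
    have "(\<Sum>i=1..n. A j i * idm n i k) = (\<Sum>i\<in>{k}. A j i * idm n i k)"
      using True by (intro sum.mono_neutral_right) (auto simp: idm_def)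
    then show ?thesis
      using True by (simp add: mmul_def idm_def)
  qed (use assms in \<open>auto simp: mmul_def\<close>)
qed

lemma Tplus_mmul_idm_left [simp]: "A \<in> Tplus n \<Longrightarrow> mmul n (idm n) A = A"
  by (rule mmul_idm_left) (auto simp: Tplus_def)

lemma Tplus_mmul_idm_right [simp]: "A \<in> Tplus n \<Longrightarrow> mmul n A (idm n) = A"
  by (rule mmul_idm_right) (auto simp: Tplus_def)

lemma mmul_Tplus:
  assumes A: "A \<in> Tplus n" and B: "B \<in> Tplus n"
  shows "mmul n A B \<in> Tplus n"
proof -
  have diag: "mmul n A B j j = 1" if j: "j \<in> {1..n}" for j
  proof -
    have "A j i * B i j = 0" if "i \<in> {1..n} - {j}" for i
      using A B j that by (cases "i < j") (auto simp: Tplus_def)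
    then have "(\<Sum>i=1..n. A j i * B i j) = (\<Sum>i\<in>{j}. A j i * B i j)"
      using j by (intro sum.mono_neutral_right) auto
    then show ?thesis
      using j A B by (simp add: mmul_def Tplus_def)
  qed
  have lower: "mmul n A B j k = 0" if "1 \<le> k" "k < j" "j \<le> n" for j k
  proof -
    have "A j i * B i k = 0" if "i \<in> {1..n}" for i
      using A B \<open>1 \<le> k\<close> \<open>k < j\<close> \<open>j \<le> n\<close> that by (cases "i < j") (auto simp: Tplus_def)
    then show ?thesis
      by (auto simp: mmul_def intro!: sum.neutral)
  qed
  show ?thesis
    using diag lower by (auto simp: Tplus_def mmul_def)
qed

function unitri_inv :: "nat \<Rightarrow> (nat \<Rightarrow> nat \<Rightarrow> 'a::field) \<Rightarrow> nat \<Rightarrow> nat \<Rightarrow> 'a" where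
  "unitri_inv n A j k =
     (if j \<notin> {1..n} \<or> k \<notin> {1..n} \<or> k < j then 0
      else if j = k then 1
      else - (\<Sum>i\<in>{j<..k}. A j i * unitri_inv n A i k))"
  by auto
termination by (relation "measure (\<lambda>(n, A, j, k). k - j)") auto

declare unitri_inv.simps [simp del]

lemma unitri_inv_Tplus: "unitri_inv n A \<in> Tplus n"
  by (auto simp: Tplus_def unitri_inv.simps)

lemma mmul_unitri_inv:
  assumes A: "A \<in> Tplus n"
  shows "mmul n A (unitri_inv n A) = idm n"
proof (intro ext)
  fix j k
  show "mmul n A (unitri_inv n A) j k = idm n j k"
  proof (cases "j \<in> {1..n} \<and> k \<in> {1..n}")
    case jk: True
    have vanish: "A j i * unitri_inv n A i k = 0" if "i \<in> {1..n}" "i < j \<or> k < i" for i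
      using that A jk by (auto simp: Tplus_def unitri_inv.simps)
    show ?thesis
    proof (cases "k < j")
      case True
      then have "(\<Sum>i=1..n. A j i * unitri_inv n A i k) = 0"
        using True by (intro sum.neutral ballI vanish) auto
      then show ?thesis
        using jk True by (simp add: mmul_def idm_def)
    next
      case False
      have "(\<Sum>i=1..n. A j i * unitri_inv n A i k) = (\<Sum>i\<in>{j..k}. A j i * unitri_inv n A i k)"
        using jk vanish by (intro sum.mono_neutral_right) (auto simp: not_le)
      also have "{j..k} = insert j {j<..k}"
        using False by auto
      finally have "(\<Sum>i=1..n. A j i * unitri_inv n A i k)
          = A j j * unitri_inv n A j k + (\<Sum>i\<in>{j<..k}. A j i * unitri_inv n A i k)"
        by simp
      moreover have "A j j = 1"
        using A jk by (simp add: Tplus_def)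
      ultimately show ?thesis
        using jk False by (subst (asm) (2) unitri_inv.simps) (auto simp: mmul_def idm_def unitri_inv.simps)
    qed
  qed (auto simp: mmul_def idm_def)
qed

lemma Tplus_left_inverse_eq_right_inverse:
  assumes "A \<in> Tplus n" "B \<in> Tplus n" "B' \<in> Tplus n"
    and "mmul n B A = idm n" and "mmul n A B' = idm n"
  shows "B = B'"
proof -
  have "B = mmul n B (mmul n A B')"
    using assms by simp
  also have "\<dots> = mmul n (mmul n B A) B'"
    by (simp add: mmul_assoc)
  also have "\<dots> = B'"
    using assms by simp
  finally show ?thesis .
qed

lemma unitri_inv_mmul:
  assumes A: "A \<in> Tplus n"
  shows "mmul n (unitri_inv n A) A = idm n"
proof -
  let ?B = "unitri_inv n A"
  have "A = unitri_inv n ?B"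
    using Tplus_left_inverse_eq_right_inverse[OF unitri_inv_Tplus A unitri_inv_Tplus]
      mmul_unitri_inv[OF A] mmul_unitri_inv[OF unitri_inv_Tplus] by blast
  then show ?thesis
    using mmul_unitri_inv[OF unitri_inv_Tplus, of n A] by simp
qed

lemma minv_eq_unitri_inv:
  assumes A: "A \<in> Tplus n"
  shows "minv n A = unitri_inv n A"
  unfolding minv_def
proof (rule the_equality)
  show "unitri_inv n A \<in> Tplus n \<and> mmul n A (unitri_inv n A) = idm n \<and> mmul n (unitri_inv n A) A = idm n"
    using A unitri_inv_Tplus mmul_unitri_inv unitri_inv_mmul by blast
  fix B assume "B \<in> Tplus n \<and> mmul n A B = idm n \<and> mmul n B A = idm n"
  then show "B = unitri_inv n A"
    using Tplus_left_inverse_eq_right_inverse[OF A, of B "unitri_inv n A"]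
      unitri_inv_Tplus mmul_unitri_inv[OF A] by blast
qed

lemma minv_Tplus [simp]: "A \<in> Tplus n \<Longrightarrow> minv n A \<in> Tplus n"
  by (simp add: minv_eq_unitri_inv unitri_inv_Tplus)

lemma mmul_minv_right [simp]: "A \<in> Tplus n \<Longrightarrow> mmul n A (minv n A) = idm n"
  by (simp add: minv_eq_unitri_inv mmul_unitri_inv)

lemma mmul_minv_left [simp]: "A \<in> Tplus n \<Longrightarrow> mmul n (minv n A) A = idm n"
  by (simp add: minv_eq_unitri_inv unitri_inv_mmul)

lemma mmul_minv_mmul_cancel [simp]: "C \<in> Tplus n \<Longrightarrow> A \<in> Tplus n \<Longrightarrow> mmul n (minv n C) (mmul n C A) = A"
  by (simp flip: mmul_assoc)

lemma mmul_mmul_minv_cancel [simp]: "C \<in> Tplus n \<Longrightarrow> A \<in> Tplus n \<Longrightarrow> mmul n C (mmul n (minv n C) A) = A"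
  by (simp flip: mmul_assoc)

lemma minv_unique:
  assumes "A \<in> Tplus n" "B \<in> Tplus n" "mmul n B A = idm n"
  shows "minv n A = B"
  using Tplus_left_inverse_eq_right_inverse[of A n B "minv n A"] assms by auto

lemma minv_minv [simp]: "A \<in> Tplus n \<Longrightarrow> minv n (minv n A) = A"
  by (rule minv_unique) auto

lemma minv_mmul:
  assumes A: "A \<in> Tplus n" and B: "B \<in> Tplus n"
  shows "minv n (mmul n A B) = mmul n (minv n B) (minv n A)"
proof (rule minv_unique)
  have "mmul n (mmul n (minv n B) (minv n A)) (mmul n A B)
      = mmul n (minv n B) (mmul n (mmul n (minv n A) A) B)"
    by (simp add: mmul_assoc)
  then show "mmul n (mmul n (minv n B) (minv n A)) (mmul n A B) = idm n"
    using A B by simp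
qed (use A B in \<open>auto simp: mmul_Tplus\<close>)

lemma minv_mmul_eq_idm_iff:
  assumes "A \<in> Tplus n" "B \<in> Tplus n"
  shows "mmul n (minv n B) A = idm n \<longleftrightarrow> A = B"
proof
  assume "mmul n (minv n B) A = idm n"
  then have "minv n A = minv n B"
    using assms by (intro minv_unique) auto
  then show "A = B"
    using assms by (metis minv_minv)
qed (use assms in simp)

lemma mmul_minv_eq_idm_iff:
  assumes "A \<in> Tplus n" "B \<in> Tplus n"
  shows "mmul n A (minv n B) = idm n \<longleftrightarrow> A = B"
  using minv_unique[of "minv n B" n A] assms by auto

lemma minv_mmul_left_translate:
  assumes "C \<in> Tplus n" "A \<in> Tplus n" "A' \<in> Tplus n"
  shows "mmul n (minv n (mmul n C A')) (mmul n C A) = mmul n (minv n A') A"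
  using assms by (simp add: minv_mmul mmul_assoc)

lemma mmul_minv_right_translate:
  assumes "C \<in> Tplus n" "A \<in> Tplus n" "A' \<in> Tplus n"
  shows "mmul n (mmul n A C) (minv n (mmul n A' C)) = mmul n A (minv n A')"
  using assms by (simp add: minv_mmul mmul_assoc)

lemma mmul_diff_right: "mmul n X Y - mmul n X Z = mmul n X (Y - Z)"
  by (auto simp: fun_eq_iff mmul_def sum_subtractf[symmetric] right_diff_distrib)

lemma mmul_diff_left: "mmul n Y X - mmul n Z X = mmul n (Y - Z) X"
  by (auto simp: fun_eq_iff mmul_def sum_subtractf[symmetric] left_diff_distrib)

section \<open>Non-archimedean absolute values\<close>

locale nonarch_abs =
  fixes absv :: "'a::field \<Rightarrow> real"
  assumes abs_nonneg: "absv x \<ge> 0"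
    and abs_eq_0_iff: "absv x = 0 \<longleftrightarrow> x = 0"
    and abs_mult: "absv (x * y) = absv x * absv y"
    and abs_add_le_max: "absv (x + y) \<le> max (absv x) (absv y)"
begin

lemma abs_zero [simp]: "absv 0 = 0"
  using abs_eq_0_iff by simp

lemma abs_one [simp]: "absv 1 = 1"
proof -
  have "absv 1 = absv 1 * absv 1"
    using abs_mult[of 1 1] by simp
  moreover have "absv 1 \<noteq> 0"
    using abs_eq_0_iff by simp
  ultimately show ?thesis
    by simp
qed

lemma abs_minus [simp]: "absv (- x) = absv x"
proof -
  have "absv (-1) * absv (-1) = 1"
    using abs_mult[of "-1" "-1"] by simp
  then have "absv (-1) = 1"
    using abs_nonneg[of "-1"] power2_eq_1_iff[of "absv (-1)"] by (auto simp: power2_eq_square)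
  then show ?thesis
    using abs_mult[of "-1" x] by simp
qed

lemma abs_sum_le:
  assumes "finite S" "0 \<le> M" "\<And>i. i \<in> S \<Longrightarrow> absv (f i) \<le> M"
  shows "absv (sum f S) \<le> M"
  using assms
proof (induction S rule: finite_induct)
  case (insert x F)
  have "absv (f x + sum f F) \<le> max (absv (f x)) (absv (sum f F))"
    by (rule abs_add_le_max)
  also have "\<dots> \<le> M"
    using insert by auto
  finally show ?case
    using insert by simp
qed simp

lemma abs_mult_le_power:
  assumes "absv x \<le> M ^ (i - j)" "absv y \<le> M ^ (k - i)" "0 \<le> M" "j \<le> i" "i \<le> k"
  shows "absv (x * y) \<le> M ^ (k - j)"
proof -
  have "absv (x * y) \<le> M ^ (i - j) * M ^ (k - i)"
    using assms by (simp add: abs_mult mult_mono abs_nonneg)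
  also have "\<dots> = M ^ (k - j)"
    using assms by (simp add: power_add[symmetric])
  finally show ?thesis .
qed

definition mat_bounded :: "nat \<Rightarrow> (nat \<Rightarrow> nat \<Rightarrow> 'a) \<Rightarrow> real \<Rightarrow> bool" where
  "mat_bounded n X c \<longleftrightarrow> (\<forall>j\<in>{1..n}. \<forall>k\<in>{1..n}. absv (X j k) \<le> c)"

lemma mat_bounded_mmul:
  assumes "mat_bounded n X a" "mat_bounded n Y b" "0 \<le> a" "0 \<le> b"
  shows "mat_bounded n (mmul n X Y) (a * b)"
  unfolding mat_bounded_def
proof (intro ballI)
  fix j k assume "j \<in> {1..n}" "k \<in> {1..n}"
  moreover have "absv (\<Sum>i=1..n. X j i * Y i k) \<le> a * b"
    using assms \<open>j \<in> {1..n}\<close> \<open>k \<in> {1..n}\<close>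
    by (intro abs_sum_le) (auto simp: mat_bounded_def abs_mult intro!: mult_mono abs_nonneg)
  ultimately show "absv (mmul n X Y j k) \<le> a * b"
    by (simp add: mmul_def)
qed

lemma mat_bounded_exists: "\<exists>K>0. mat_bounded n X K"
proof (intro exI conjI)
  let ?S = "\<Sum>i\<in>{1..n}. \<Sum>k\<in>{1..n}. absv (X i k)"
  have "absv (X i k) \<le> ?S" if "i \<in> {1..n}" "k \<in> {1..n}" for i k
  proof -
    have "absv (X i k) \<le> (\<Sum>k\<in>{1..n}. absv (X i k))"
      using that by (intro member_le_sum) (auto simp: abs_nonneg)
    also have "\<dots> \<le> ?S"
      using that by (intro member_le_sum[where f = "\<lambda>i. \<Sum>k\<in>{1..n}. absv (X i k)"])
        (auto intro: sum_nonneg simp: abs_nonneg)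
    finally show ?thesis .
  qed
  then show "mat_bounded n X (1 + ?S)"
    by (force simp: mat_bounded_def)
  have "0 \<le> ?S"
    by (intro sum_nonneg) (simp add: abs_nonneg)
  then show "1 + ?S > 0"
    by simp
qed

end

section \<open>The norm \<open>N\<close>\<close>

lemma powr_inverse_le_iff_le_power:
  fixes x M :: real
  assumes "0 \<le> x" "0 \<le> M" "1 \<le> d"
  shows "x powr (1 / real d) \<le> M \<longleftrightarrow> x \<le> M ^ d"
proof -
  have "x powr (1 / real d) \<le> M \<longleftrightarrow> (x powr (1 / real d)) ^ d \<le> M ^ d"
    using assms by (intro power_mono_iff[symmetric]) auto
  also have "(x powr (1 / real d)) ^ d = x"
    using assms by (cases "x = 0") (simp_all add: powr_realpow[symmetric] powr_powr)
  finally show ?thesis .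
qed

locale unitriangular_norm = nonarch_abs absv for absv :: "'a::field \<Rightarrow> real" +
  fixes n :: nat
  assumes two_le_n: "2 \<le> n"
begin

abbreviation N :: "(nat \<Rightarrow> nat \<Rightarrow> 'a) \<Rightarrow> real" where
  "N \<equiv> Nnorm n absv"

definition graded_le :: "(nat \<Rightarrow> nat \<Rightarrow> 'a) \<Rightarrow> real \<Rightarrow> bool" where
  "graded_le A M \<longleftrightarrow> (\<forall>j k. 1 \<le> j \<and> j < k \<and> k \<le> n \<longrightarrow> absv (A j k) \<le> M ^ (k - j))"

lemma finite_Nnorm_set:
  "finite {absv (A j k) powr (1 / real (k - j)) | j k. 1 \<le> j \<and> j < k \<and> k \<le> n}"
proof -
  have "finite {absv (A j k) powr (1 / real (k - j)) | j k. j \<in> {1..n} \<and> k \<in> {1..n}}"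
    by (rule finite_image_set2) auto
  moreover have "{absv (A j k) powr (1 / real (k - j)) | j k. 1 \<le> j \<and> j < k \<and> k \<le> n}
      \<subseteq> {absv (A j k) powr (1 / real (k - j)) | j k. j \<in> {1..n} \<and> k \<in> {1..n}}"
    by fastforce
  ultimately show ?thesis
    by (rule finite_subset[rotated])
qed

lemma Nnorm_set_ne:
  "{absv (A j k) powr (1 / real (k - j)) | j k. 1 \<le> j \<and> j < k \<and> k \<le> n} \<noteq> {}"
  using two_le_n by (intro ex_in_conv[THEN iffD1] exI CollectI exI[of _ 1] exI[of _ 2]) simp

lemma Nnorm_nonneg: "0 \<le> N A"
proof -
  have "absv (A 1 2) powr (1 / real (2 - 1)) \<le> N A"
    unfolding Nnorm_def using two_le_n
    by (intro Max_ge[OF finite_Nnorm_set] CollectI exI[of _ 1] exI[of _ 2]) simp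
  then show ?thesis
    by (simp add: order_trans[OF abs_nonneg])
qed

lemma Nnorm_le_iff:
  assumes M: "0 \<le> M"
  shows "N A \<le> M \<longleftrightarrow> graded_le A M"
proof -
  have "N A \<le> M \<longleftrightarrow>
      (\<forall>j k. 1 \<le> j \<and> j < k \<and> k \<le> n \<longrightarrow> absv (A j k) powr (1 / real (k - j)) \<le> M)"
    unfolding Nnorm_def Max_le_iff[OF finite_Nnorm_set Nnorm_set_ne] by blast
  also have "\<dots> \<longleftrightarrow> graded_le A M"
  proof -
    have "absv (A j k) powr (1 / real (k - j)) \<le> M \<longleftrightarrow> absv (A j k) \<le> M ^ (k - j)"
      if "j < k" for j k
      using that by (intro powr_inverse_le_iff_le_power[OF abs_nonneg M]) auto
    then show ?thesis
      unfolding graded_le_def by meson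
  qed
  finally show ?thesis .
qed

lemma graded_le_Nnorm: "graded_le A (N A)"
  using Nnorm_le_iff[OF Nnorm_nonneg] by blast

lemma graded_le_mono: "graded_le A M \<Longrightarrow> 0 \<le> M \<Longrightarrow> M \<le> M' \<Longrightarrow> graded_le A M'"
  unfolding graded_le_def by (meson order_trans power_mono)

lemma Tplus_graded_le_entry:
  assumes "A \<in> Tplus n" "graded_le A M" "1 \<le> j" "j \<le> i" "i \<le> n"
  shows "absv (A j i) \<le> M ^ (i - j)"
  using assms by (cases "j = i") (auto simp: Tplus_def graded_le_def)

lemma graded_le_mmul:
  assumes A: "A \<in> Tplus n" and B: "B \<in> Tplus n"
    and bA: "graded_le A M" and bB: "graded_le B M" and M: "0 \<le> M"
  shows "graded_le (mmul n A B) M"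
  unfolding graded_le_def
proof (intro allI impI)
  fix j k assume jk: "1 \<le> j \<and> j < k \<and> k \<le> n"
  have "absv (A j i * B i k) \<le> M ^ (k - j)" if i: "i \<in> {1..n}" for i
  proof -
    consider "i < j" | "k < i" | "j \<le> i \<and> i \<le> k"
      by linarith
    then show ?thesis
    proof cases
      case 1
      then show ?thesis using A i jk M by (simp add: Tplus_def)
    next
      case 2
      then show ?thesis using B i jk M by (simp add: Tplus_def)
    next
      case 3
      then show ?thesis
        using jk i M by (intro abs_mult_le_power[where i = i] Tplus_graded_le_entry[OF A bA]
            Tplus_graded_le_entry[OF B bB]) auto
    qed
  qed
  then have "absv (\<Sum>i=1..n. A j i * B i k) \<le> M ^ (k - j)"
    using M by (intro abs_sum_le) auto
  then show "absv (mmul n A B j k) \<le> M ^ (k - j)"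
    using jk by (simp add: mmul_def)
qed

lemma Nnorm_mmul_le:
  assumes "A \<in> Tplus n" "B \<in> Tplus n"
  shows "N (mmul n A B) \<le> max (N A) (N B)"
proof -
  let ?M = "max (N A) (N B)"
  have M: "0 \<le> ?M"
    using Nnorm_nonneg by (simp add: le_max_iff_disj)
  have "graded_le A ?M" "graded_le B ?M"
    using graded_le_mono[OF graded_le_Nnorm Nnorm_nonneg] by auto
  then show ?thesis
    using graded_le_mmul assms M Nnorm_le_iff[OF M] by blast
qed

lemma graded_le_unitri_inv:
  assumes A: "A \<in> Tplus n" and bA: "graded_le A M" and M: "0 \<le> M"
  shows "graded_le (unitri_inv n A) M"
proof -
  have "absv (unitri_inv n A j k) \<le> M ^ (k - j)" if "1 \<le> j" "j \<le> k" "k \<le> n" for j k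
    using that
  proof (induction "k - j" arbitrary: j rule: less_induct)
    case less
    show ?case
    proof (cases "j = k")
      case True
      then show ?thesis
        using less.prems by (simp add: unitri_inv.simps)
    next
      case False
      have IH: "absv (unitri_inv n A i k) \<le> M ^ (k - i)" if "i \<in> {j<..k}" for i
        using less that by auto
      have "absv (A j i * unitri_inv n A i k) \<le> M ^ (k - j)" if "i \<in> {j<..k}" for i
        using that less.prems M
        by (intro abs_mult_le_power[where i = i] Tplus_graded_le_entry[OF A bA] IH) auto
      then have "absv (\<Sum>i\<in>{j<..k}. A j i * unitri_inv n A i k) \<le> M ^ (k - j)"
        using M by (intro abs_sum_le) auto
      then show ?thesis
        using less.prems False by (subst unitri_inv.simps) auto
    qed
  qed
  then show ?thesis
    by (auto simp: graded_le_def)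
qed

lemma Nnorm_minv_le: "A \<in> Tplus n \<Longrightarrow> N (minv n A) \<le> N A"
  using graded_le_unitri_inv[OF _ graded_le_Nnorm Nnorm_nonneg] Nnorm_le_iff[OF Nnorm_nonneg]
  by (simp add: minv_eq_unitri_inv)

lemma Nnorm_minv: "A \<in> Tplus n \<Longrightarrow> N (minv n A) = N A"
  using Nnorm_minv_le[of A] Nnorm_minv_le[of "minv n A"] by simp

lemma Nnorm_eq_0_iff:
  assumes A: "A \<in> Tplus n"
  shows "N A = 0 \<longleftrightarrow> A = idm n"
proof -
  have "N A = 0 \<longleftrightarrow> graded_le A 0"
    using Nnorm_le_iff[of 0 A] Nnorm_nonneg[of A] by auto
  also have "\<dots> \<longleftrightarrow> (\<forall>j k. 1 \<le> j \<and> j < k \<and> k \<le> n \<longrightarrow> A j k = 0)"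
  proof -
    have "absv (A j k) \<le> 0 ^ (k - j) \<longleftrightarrow> A j k = 0" if "j < k" for j k
      using that abs_nonneg[of "A j k"] by (auto simp: abs_eq_0_iff[symmetric] zero_power)
    then show ?thesis
      unfolding graded_le_def by meson
  qed
  also have "\<dots> \<longleftrightarrow> A = idm n"
    using A by (auto simp: fun_eq_iff Tplus_def idm_def) (metis linorder_neqE_nat)
  finally show ?thesis .
qed

lemma Nnorm_minv_mmul_commute:
  assumes "A \<in> Tplus n" "B \<in> Tplus n"
  shows "N (mmul n (minv n B) A) = N (mmul n (minv n A) B)"
  using Nnorm_minv[of "mmul n (minv n B) A"] assms by (simp add: minv_mmul mmul_Tplus)

lemma Nnorm_mmul_minv_commute:
  assumes "A \<in> Tplus n" "B \<in> Tplus n"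
  shows "N (mmul n A (minv n B)) = N (mmul n B (minv n A))"
  using Nnorm_minv[of "mmul n A (minv n B)"] assms by (simp add: minv_mmul mmul_Tplus)

lemma ultrametric_left: "is_ultrametric_on (Tplus n) (\<lambda>A A'. N (mmul n (minv n A') A))"
  unfolding is_ultrametric_on_def
proof (intro conjI ballI)
  fix x y z :: "nat \<Rightarrow> nat \<Rightarrow> 'a" assume x: "x \<in> Tplus n" and y: "y \<in> Tplus n" and z: "z \<in> Tplus n"
  have "mmul n (minv n z) x = mmul n (mmul n (minv n z) y) (mmul n (minv n y) x)"
    using x y z by (simp add: mmul_assoc)
  then show "N (mmul n (minv n z) x) \<le> max (N (mmul n (minv n y) x)) (N (mmul n (minv n z) y))"
    using Nnorm_mmul_le[of "mmul n (minv n z) y" "mmul n (minv n y) x"] x y z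
    by (simp add: mmul_Tplus max.commute)
next
  fix x y :: "nat \<Rightarrow> nat \<Rightarrow> 'a" assume x: "x \<in> Tplus n" and y: "y \<in> Tplus n"
  show "0 \<le> N (mmul n (minv n y) x)"
    by (rule Nnorm_nonneg)
  show "N (mmul n (minv n y) x) = 0 \<longleftrightarrow> x = y"
    using x y by (simp add: Nnorm_eq_0_iff mmul_Tplus minv_mmul_eq_idm_iff)
  show "N (mmul n (minv n y) x) = N (mmul n (minv n x) y)"
    using x y by (rule Nnorm_minv_mmul_commute)
qed

lemma ultrametric_right: "is_ultrametric_on (Tplus n) (\<lambda>A A'. N (mmul n A (minv n A')))"
  unfolding is_ultrametric_on_def
proof (intro conjI ballI)
  fix x y z :: "nat \<Rightarrow> nat \<Rightarrow> 'a" assume x: "x \<in> Tplus n" and y: "y \<in> Tplus n" and z: "z \<in> Tplus n"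
  have "mmul n x (minv n z) = mmul n (mmul n x (minv n y)) (mmul n y (minv n z))"
    using x y z by (simp add: mmul_assoc)
  then show "N (mmul n x (minv n z)) \<le> max (N (mmul n x (minv n y))) (N (mmul n y (minv n z)))"
    using Nnorm_mmul_le[of "mmul n x (minv n y)" "mmul n y (minv n z)"] x y z
    by (simp add: mmul_Tplus)
next
  fix x y :: "nat \<Rightarrow> nat \<Rightarrow> 'a" assume x: "x \<in> Tplus n" and y: "y \<in> Tplus n"
  show "0 \<le> N (mmul n x (minv n y))"
    by (rule Nnorm_nonneg)
  show "N (mmul n x (minv n y)) = 0 \<longleftrightarrow> x = y"
    using x y by (simp add: Nnorm_eq_0_iff mmul_Tplus mmul_minv_eq_idm_iff)
  show "N (mmul n x (minv n y)) = N (mmul n y (minv n x))"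
    using x y by (rule Nnorm_mmul_minv_commute)
qed

end

section \<open>The topologies\<close>

lemma metric_open_in_iff_matrix_open_in:
  assumes near: "\<And>A e. A \<in> S \<Longrightarrow> 0 < e \<Longrightarrow> \<exists>\<delta>>0. \<forall>B\<in>S.
      (\<forall>j\<in>{1..n}. \<forall>k\<in>{1..n}. absv (B j k - A j k) < \<delta>) \<longrightarrow> d A B < e"
    and far: "\<And>A e. A \<in> S \<Longrightarrow> 0 < e \<Longrightarrow> \<exists>\<delta>>0. \<forall>B\<in>S.
      d A B < \<delta> \<longrightarrow> (\<forall>j\<in>{1..n}. \<forall>k\<in>{1..n}. absv (B j k - A j k) < e)"
  shows "metric_open_in S d U \<longleftrightarrow> matrix_open_in n absv S U"
proof
  assume open_d: "metric_open_in S d U"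
  show "matrix_open_in n absv S U"
    unfolding matrix_open_in_def
  proof (intro conjI ballI)
    show "U \<subseteq> S"
      using open_d by (simp add: metric_open_in_def)
    fix A assume "A \<in> U"
    with open_d obtain e where "0 < e" "\<forall>B\<in>S. d A B < e \<longrightarrow> B \<in> U" "A \<in> S"
      unfolding metric_open_in_def by blast
    with near show "\<exists>\<delta>>0. \<forall>B\<in>S. (\<forall>j\<in>{1..n}. \<forall>k\<in>{1..n}. absv (B j k - A j k) < \<delta>) \<longrightarrow> B \<in> U"
      by meson
  qed
next
  assume open_m: "matrix_open_in n absv S U"
  show "metric_open_in S d U"
    unfolding metric_open_in_def
  proof (intro conjI ballI)
    show "U \<subseteq> S"
      using open_m by (simp add: matrix_open_in_def)
    fix A assume "A \<in> U"
    with open_m obtain e where "0 < e" "A \<in> S"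
      "\<forall>B\<in>S. (\<forall>j\<in>{1..n}. \<forall>k\<in>{1..n}. absv (B j k - A j k) < e) \<longrightarrow> B \<in> U"
      unfolding matrix_open_in_def by blast
    with far show "\<exists>\<delta>>0. \<forall>B\<in>S. d A B < \<delta> \<longrightarrow> B \<in> U"
      by meson
  qed
qed

context unitriangular_norm
begin

lemma mat_bounded_near_idm_if_Nnorm_le:
  assumes D: "D \<in> Tplus n" and "N D \<le> d" and d: "0 \<le> d" "d \<le> 1"
  shows "mat_bounded n (D - idm n) d"
  unfolding mat_bounded_def
proof (intro ballI)
  fix i k assume i: "i \<in> {1..n}" and k: "k \<in> {1..n}"
  have "graded_le D d"
    using assms Nnorm_le_iff by blast
  consider "i < k" | "k \<le> i"
    by linarith
  then show "absv ((D - idm n) i k) \<le> d"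
  proof cases
    case 1
    then have "absv (D i k) \<le> d ^ (k - i)"
      using \<open>graded_le D d\<close> i k by (auto simp: graded_le_def)
    also have "\<dots> \<le> d ^ 1"
      using 1 d by (intro power_decreasing) auto
    finally show ?thesis
      using 1 by (simp add: idm_def)
  next
    case 2
    then show ?thesis
      using D i k d by (cases "i = k") (auto simp: Tplus_def idm_def)
  qed
qed

lemma Nnorm_le_if_mat_bounded_near_idm:
  assumes D: "D \<in> Tplus n" and near: "mat_bounded n (D - idm n) (d ^ n)" and d: "0 \<le> d" "d \<le> 1"
  shows "N D \<le> d"
  unfolding Nnorm_le_iff[OF d(1)] graded_le_def
proof (intro allI impI)
  fix j k assume jk: "1 \<le> j \<and> j < k \<and> k \<le> n"
  have "absv ((D - idm n) j k) \<le> d ^ n"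
    using near jk by (auto simp: mat_bounded_def)
  then have "absv (D j k) \<le> d ^ n"
    using jk by (simp add: idm_def)
  also have "\<dots> \<le> d ^ (k - j)"
    using d jk by (intro power_decreasing) auto
  finally show "absv (D j k) \<le> d ^ (k - j)" .
qed

text \<open>Both metrics compare \<open>B\<close> with \<open>A\<close> through \<open>D = A\<inverse>B\<close> resp. \<open>D = BA\<inverse>\<close>: the distance is
  \<open>N(D)\<close>, while \<open>B - A = A(D - I)\<close> resp. \<open>(D - I)A\<close>.\<close>

lemma left_dist_small_if_entries_close:
  assumes A: "A \<in> Tplus n" and e: "0 < e"
  shows "\<exists>\<delta>>0. \<forall>B\<in>Tplus n.
    (\<forall>j\<in>{1..n}. \<forall>k\<in>{1..n}. absv (B j k - A j k) < \<delta>) \<longrightarrow> N (mmul n (minv n B) A) < e"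
proof -
  define c where "c = min (e / 2) 1"
  have c: "0 < c" "c \<le> 1" "c < e"
    using e by (auto simp: c_def)
  obtain K where K: "0 < K" "mat_bounded n (minv n A) K"
    using mat_bounded_exists by blast
  have "N (mmul n (minv n B) A) \<le> c"
    if B: "B \<in> Tplus n" and close: "mat_bounded n (B - A) (c ^ n / K)" for B
  proof -
    let ?D = "mmul n (minv n A) B"
    have "?D - idm n = mmul n (minv n A) (B - A)"
      using A by (simp flip: mmul_diff_right)
    then have "mat_bounded n (?D - idm n) (K * (c ^ n / K))"
      using mat_bounded_mmul[OF K(2) close] K c by simp
    then have "N ?D \<le> c"
      using Nnorm_le_if_mat_bounded_near_idm[of ?D c] A B K c by (simp add: mmul_Tplus)
    then show ?thesis
      using Nnorm_minv_mmul_commute A B by simp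
  qed
  then show ?thesis
    using c K by (intro exI[of _ "c ^ n / K"]) (force simp: mat_bounded_def)
qed

lemma entries_close_if_left_dist_small:
  assumes A: "A \<in> Tplus n" and e: "0 < e"
  shows "\<exists>\<delta>>0. \<forall>B\<in>Tplus n.
    N (mmul n (minv n B) A) < \<delta> \<longrightarrow> (\<forall>j\<in>{1..n}. \<forall>k\<in>{1..n}. absv (B j k - A j k) < e)"
proof -
  obtain K where K: "0 < K" "mat_bounded n A K"
    using mat_bounded_exists by blast
  define \<delta> where "\<delta> = min 1 (e / (2 * K))"
  have \<delta>: "0 < \<delta>" "\<delta> \<le> 1" "K * \<delta> < e"
    using e K by (auto simp: \<delta>_def min_def field_simps)
  have "mat_bounded n (B - A) (K * \<delta>)"
    if B: "B \<in> Tplus n" and small: "N (mmul n (minv n B) A) < \<delta>" for B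
  proof -
    let ?D = "mmul n (minv n A) B"
    have "mat_bounded n (?D - idm n) \<delta>"
      using small Nnorm_minv_mmul_commute A B \<delta>
      by (intro mat_bounded_near_idm_if_Nnorm_le) (auto simp: mmul_Tplus)
    moreover have "B - A = mmul n A (?D - idm n)"
      using A B by (simp flip: mmul_diff_right)
    ultimately show ?thesis
      using mat_bounded_mmul[OF K(2)] K \<delta> by simp
  qed
  then show ?thesis
    using \<delta> by (intro exI[of _ \<delta>]) (force simp: mat_bounded_def)
qed

lemma right_dist_small_if_entries_close:
  assumes A: "A \<in> Tplus n" and e: "0 < e"
  shows "\<exists>\<delta>>0. \<forall>B\<in>Tplus n.
    (\<forall>j\<in>{1..n}. \<forall>k\<in>{1..n}. absv (B j k - A j k) < \<delta>) \<longrightarrow> N (mmul n A (minv n B)) < e"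
proof -
  define c where "c = min (e / 2) 1"
  have c: "0 < c" "c \<le> 1" "c < e"
    using e by (auto simp: c_def)
  obtain K where K: "0 < K" "mat_bounded n (minv n A) K"
    using mat_bounded_exists by blast
  have "N (mmul n A (minv n B)) \<le> c"
    if B: "B \<in> Tplus n" and close: "mat_bounded n (B - A) (c ^ n / K)" for B
  proof -
    let ?D = "mmul n B (minv n A)"
    have "?D - idm n = mmul n (B - A) (minv n A)"
      using A by (simp flip: mmul_diff_left)
    then have "mat_bounded n (?D - idm n) (c ^ n / K * K)"
      using mat_bounded_mmul[OF close K(2)] K c by simp
    then have "N ?D \<le> c"
      using Nnorm_le_if_mat_bounded_near_idm[of ?D c] A B K c by (simp add: mmul_Tplus)
    then show ?thesis
      using Nnorm_mmul_minv_commute A B by simp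
  qed
  then show ?thesis
    using c K by (intro exI[of _ "c ^ n / K"]) (force simp: mat_bounded_def)
qed

lemma entries_close_if_right_dist_small:
  assumes A: "A \<in> Tplus n" and e: "0 < e"
  shows "\<exists>\<delta>>0. \<forall>B\<in>Tplus n.
    N (mmul n A (minv n B)) < \<delta> \<longrightarrow> (\<forall>j\<in>{1..n}. \<forall>k\<in>{1..n}. absv (B j k - A j k) < e)"
proof -
  obtain K where K: "0 < K" "mat_bounded n A K"
    using mat_bounded_exists by blast
  define \<delta> where "\<delta> = min 1 (e / (2 * K))"
  have \<delta>: "0 < \<delta>" "\<delta> \<le> 1" "\<delta> * K < e"
    using e K by (auto simp: \<delta>_def min_def field_simps)
  have "mat_bounded n (B - A) (\<delta> * K)"
    if B: "B \<in> Tplus n" and small: "N (mmul n A (minv n B)) < \<delta>" for B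
  proof -
    let ?D = "mmul n B (minv n A)"
    have "mat_bounded n (?D - idm n) \<delta>"
      using small Nnorm_mmul_minv_commute A B \<delta>
      by (intro mat_bounded_near_idm_if_Nnorm_le) (auto simp: mmul_Tplus)
    moreover have "B - A = mmul n (?D - idm n) A"
      using A B by (simp add: mmul_assoc flip: mmul_diff_left)
    ultimately show ?thesis
      using mat_bounded_mmul[OF _ K(2)] K \<delta> by simp
  qed
  then show ?thesis
    using \<delta> by (intro exI[of _ \<delta>]) (force simp: mat_bounded_def)
qed

end

theorem mainTheorem5:
  fixes p n :: nat and absv :: "'a::field_char_0 \<Rightarrow> real"
  assumes "prime p" and "n \<ge> 2" and "is_padic_field p absv"
  shows "(\<forall>A\<in>Tplus n. Nnorm n absv (minv n A) = Nnorm n absv A)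
    \<and> is_ultrametric_on (Tplus n) (\<lambda>A A'. Nnorm n absv (mmul n (minv n A') A))
    \<and> (\<forall>C\<in>Tplus n. \<forall>A\<in>Tplus n. \<forall>A'\<in>Tplus n.
          Nnorm n absv (mmul n (minv n (mmul n C A')) (mmul n C A))
            = Nnorm n absv (mmul n (minv n A') A))
    \<and> (\<forall>U. metric_open_in (Tplus n) (\<lambda>A A'. Nnorm n absv (mmul n (minv n A') A)) U
            \<longleftrightarrow> matrix_open_in n absv (Tplus n) U)
    \<and> is_ultrametric_on (Tplus n) (\<lambda>A A'. Nnorm n absv (mmul n A (minv n A')))
    \<and> (\<forall>C\<in>Tplus n. \<forall>A\<in>Tplus n. \<forall>A'\<in>Tplus n.
          Nnorm n absv (mmul n (mmul n A C) (minv n (mmul n A' C)))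
            = Nnorm n absv (mmul n A (minv n A')))
    \<and> (\<forall>U. metric_open_in (Tplus n) (\<lambda>A A'. Nnorm n absv (mmul n A (minv n A'))) U
            \<longleftrightarrow> matrix_open_in n absv (Tplus n) U)"
proof -
  interpret unitriangular_norm absv n
    using assms(2,3) unfolding is_padic_field_def by unfold_locales auto
  have "metric_open_in (Tplus n) (\<lambda>A A'. N (mmul n (minv n A') A)) U
      \<longleftrightarrow> matrix_open_in n absv (Tplus n) U" for U
    by (rule metric_open_in_iff_matrix_open_in[OF
          left_dist_small_if_entries_close entries_close_if_left_dist_small])
  moreover have "metric_open_in (Tplus n) (\<lambda>A A'. N (mmul n A (minv n A'))) U
      \<longleftrightarrow> matrix_open_in n absv (Tplus n) U" for U
    by (rule metric_open_in_iff_matrix_open_in[OF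
          right_dist_small_if_entries_close entries_close_if_right_dist_small])
  ultimately show ?thesis
    by (simp add: Nnorm_minv ultrametric_left ultrametric_right
        minv_mmul_left_translate mmul_minv_right_translate)
qed

end
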